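(* Fix a prime $p$ and define $\mathbb{L}_p:\mathbb{Z}[\tfrac1p]\to[0,\infty)$ by $\mathbb{L}_p(r)=|r|+\|r\|_p$. Then $\mathbb{L}_p$ is a length function on the group $\mathbb{Z}[\tfrac1p]$ which is proper and unbounded.
   Context: $\mathbb{Z}[\tfrac1p]=\{a/p^k: a\in\mathbb{Z},k\in\mathbb{N}\}\subset\mathbb{Q}$, viewed as a discrete abelian group under addition; $|r|$ is the usual absolute value. The $p$-adic norm on $\mathbb{Q}$ is $\|0\|_p=0$ and $\|r\|_p=p^{-n}$ if $r=\frac{ap^n}{b}$ with $a,n\in\mathbb{Z}$, $b\in\mathbb{Z}\setminus\{0\}$, $\gcd(a,p)=\gcd(b,p)=\gcd(a,b)=1$. A length function on a discrete group $\Gamma$ is a map $\mathbb{L}:\Gamma\to[0,\infty)$ with $\mathbb{L}(\gamma)=0$ iff $\gamma=e$, $\mathbb{L}(\gamma^{-1})=\mathbb{L}(\gamma)$, and $\mathbb{L}(\gamma_1\gamma_2)\le\mathbb{L}(\gamma_1)+\mathbb{L}(\gamma_2)$. It is proper if $B_{\mathbb{L}}(R)=\{\gamma\in\Gamma:\mathbb{L}(\gamma)\le R\}$ is finite for every $0\le R<\infty$. *)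

theory Defs
  imports "HOL-Computational_Algebra.Computational_Algebra"
begin

definition Zinvp :: "nat \<Rightarrow> rat set" where
  "Zinvp p = {r. \<exists>(a::int) (k::nat). r = of_int a / of_nat p ^ k}"

definition padic_norm :: "nat \<Rightarrow> rat \<Rightarrow> real" where
  "padic_norm p r = (if r = 0 then 0 else
     (let (a, b) = quotient_of r;
          n = int (multiplicity (int p) a) - int (multiplicity (int p) b)
      in real p powr (- real_of_int n)))"

definition is_length_function :: "'a::ab_group_add set \<Rightarrow> ('a \<Rightarrow> real) \<Rightarrow> bool" where
  "is_length_function G L \<longleftrightarrow>
     (\<forall>g\<in>G. L g \<ge> 0) \<and>
     (\<forall>g\<in>G. L g = 0 \<longleftrightarrow> g = 0) \<and>
     (\<forall>g\<in>G. L (- g) = L g) \<and>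
     (\<forall>g\<in>G. \<forall>h\<in>G. L (g + h) \<le> L g + L h)"

definition proper_length :: "'a set \<Rightarrow> ('a \<Rightarrow> real) \<Rightarrow> bool" where
  "proper_length G L \<longleftrightarrow> (\<forall>R\<ge>0. finite {g\<in>G. L g \<le> R})"

definition unbounded_length :: "'a set \<Rightarrow> ('a \<Rightarrow> real) \<Rightarrow> bool" where
  "unbounded_length G L \<longleftrightarrow> (\<forall>C. \<exists>g\<in>G. L g > C)"

definition Lp :: "nat \<Rightarrow> rat \<Rightarrow> real" where
  "Lp p r = real_of_rat \<bar>r\<bar> + padic_norm p r"

end

theory Submission
  imports Defs
begin

text \<open>Since p-adic multiplicity is additive, the p-adic norm of a fraction a/b can be read off
  any representative, not only the reduced one; this yields symmetry and the ultrametric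
  inequality, so \<open>Lp p\<close> is a sum of two length functions. For properness, write an element
  of Z[1/p] as a/p^k with k = 0 or p not dividing a: then p^k is at most max 1 (its p-adic
  norm), so a bound on \<open>Lp p\<close> bounds k, and then |a| = |a/p^k| p^k, leaving finitely many
  pairs (a, k). The integers witness unboundedness.\<close>

lemma multiplicity_add_ge_min:
  fixes p a b :: "'a::factorial_semiring"
  assumes "a + b \<noteq> 0" and "\<not> is_unit p"
  shows "min (multiplicity p a) (multiplicity p b) \<le> multiplicity p (a + b)"
proof (rule multiplicity_geI[OF assms])
  let ?m = "min (multiplicity p a) (multiplicity p b)"
  have "p ^ ?m dvd a" and "p ^ ?m dvd b" by (simp_all add: multiplicity_dvd')
  then show "p ^ ?m dvd a + b" by simp
qed

lemma padic_norm_nonneg: "padic_norm p r \<ge> 0"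
  unfolding padic_norm_def by (auto simp: Let_def split: prod.splits)

lemma padic_norm_zero [simp]: "padic_norm p 0 = 0"
  unfolding padic_norm_def by simp

lemma padic_norm_of_int_divide:
  assumes p: "prime p" and a: "a \<noteq> 0" and b: "b \<noteq> 0"
  shows "padic_norm p (of_int a / of_int b) =
    real p powr (real (multiplicity (int p) b) - real (multiplicity (int p) a))"
proof -
  define r where "r = (of_int a / of_int b :: rat)"
  obtain x y where q: "quotient_of r = (x, y)" by (cases "quotient_of r") auto
  have y: "y > 0" using quotient_of_denom_pos[OF q] .
  have r_xy: "r = of_int x / of_int y" using quotient_of_div[OF q] .
  have r0: "r \<noteq> 0" using a b by (simp add: r_def)
  with r_xy have x: "x \<noteq> 0" by auto
  have "of_int (a * y) = (of_int (x * b) :: rat)"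
    using r_xy b y by (simp add: r_def field_simps)
  then have "multiplicity (int p) (a * y) = multiplicity (int p) (x * b)"
    by (simp only: of_int_eq_iff)
  moreover have "prime_elem (int p)" using p by simp
  ultimately have "multiplicity (int p) a + multiplicity (int p) y =
      multiplicity (int p) x + multiplicity (int p) b"
    using a b x y by (simp add: prime_elem_multiplicity_mult_distrib)
  then have "real (multiplicity (int p) y) - real (multiplicity (int p) x) =
      real (multiplicity (int p) b) - real (multiplicity (int p) a)"
    by (simp add: algebra_simps flip: of_nat_add)
  then show ?thesis
    using r0 q unfolding padic_norm_def r_def[symmetric] by (simp add: Let_def)
qed

lemma padic_norm_uminus [simp]:
  assumes "prime p"
  shows "padic_norm p (- r) = padic_norm p r"
proof (cases "r = 0")
  case False
  obtain a b where r: "r = of_int a / of_int b" and b: "b > 0"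
    by (cases r) (auto simp: Fract_of_int_quotient)
  with False have a: "a \<noteq> 0" by auto
  have "padic_norm p (- r) = padic_norm p (of_int (- a) / of_int b)" using r by simp
  also have "\<dots> = padic_norm p r"
    using padic_norm_of_int_divide[OF assms, of "- a" b] padic_norm_of_int_divide[OF assms a]
      a b r by simp
  finally show ?thesis .
qed simp

lemma padic_norm_add_le_max:
  assumes p: "prime p"
  shows "padic_norm p (r + s) \<le> max (padic_norm p r) (padic_norm p s)"
proof (cases "r = 0 \<or> s = 0 \<or> r + s = 0")
  case True
  then show ?thesis using padic_norm_nonneg[of p r] padic_norm_nonneg[of p s]
    by (auto simp: le_max_iff_disj)
next
  case False
  let ?v = "multiplicity (int p)"
  obtain a b where r: "r = of_int a / of_int b" and b: "b > 0"
    by (cases r) (auto simp: Fract_of_int_quotient)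
  obtain c d where s: "s = of_int c / of_int d" and d: "d > 0"
    by (cases s) (auto simp: Fract_of_int_quotient)
  have a: "a \<noteq> 0" and c: "c \<noteq> 0" using False r s by auto
  have rs: "r + s = of_int (a * d + c * b) / of_int (b * d)"
    using r s b d by (simp add: field_simps)
  with False have sum: "a * d + c * b \<noteq> 0" by (metis div_0 of_int_0)
  have pe: "prime_elem (int p)" using p by simp
  have "min (?v (a * d)) (?v (c * b)) \<le> ?v (a * d + c * b)"
    by (intro multiplicity_add_ge_min sum prime_elem_not_unit pe)
  then have v_sum: "min (?v a + ?v d) (?v c + ?v b) \<le> ?v (a * d + c * b)"
    using a b c d pe by (simp add: prime_elem_multiplicity_mult_distrib)
  have "?v (b * d) = ?v b + ?v d"
    using b d pe by (simp add: prime_elem_multiplicity_mult_distrib)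
  then have norm_rs: "padic_norm p (r + s) =
      real p powr (real (?v b + ?v d) - real (?v (a * d + c * b)))"
    using padic_norm_of_int_divide[OF p sum, of "b * d"] rs b d by simp
  have norm_r: "padic_norm p r = real p powr (real (?v b) - real (?v a))"
    using padic_norm_of_int_divide[OF p a] r b by simp
  have norm_s: "padic_norm p s = real p powr (real (?v d) - real (?v c))"
    using padic_norm_of_int_divide[OF p c] s d by simp
  have p1: "real p > 1" using p prime_gt_1_nat by simp
  show ?thesis
  proof (cases "?v a + ?v d \<le> ?v c + ?v b")
    case True
    with v_sum have "padic_norm p (r + s) \<le> padic_norm p r"
      unfolding norm_rs norm_r using p1 by (intro powr_mono) auto
    then show ?thesis by simp
  next
    case False
    with v_sum have "padic_norm p (r + s) \<le> padic_norm p s"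
      unfolding norm_rs norm_s using p1 by (intro powr_mono) auto
    then show ?thesis by simp
  qed
qed

lemma padic_norm_triangle:
  assumes "prime p"
  shows "padic_norm p (r + s) \<le> padic_norm p r + padic_norm p s"
  using padic_norm_add_le_max[OF assms, of r s] padic_norm_nonneg[of p r] padic_norm_nonneg[of p s]
  by linarith

lemma Zinvp_reduced_fraction:
  assumes p: "prime p" and g: "g \<in> Zinvp p"
  obtains a k where "g = of_int a / of_nat p ^ k" and "k = 0 \<or> \<not> int p dvd a"
proof -
  obtain a k where "g = of_int a / of_nat p ^ k" using g unfolding Zinvp_def by auto
  then show ?thesis
  proof (induction k arbitrary: a)
    case (Suc k)
    show ?case
    proof (cases "int p dvd a")
      case True
      then obtain b where "a = int p * b" by (auto elim: dvdE)
      with Suc.prems p have "g = of_int b / of_nat p ^ k" by auto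
      then show ?thesis by (rule Suc.IH)
    qed (use Suc.prems that in blast)
  qed (use that in blast)
qed

lemma padic_norm_of_int_divide_prime_power:
  assumes p: "prime p" and a: "\<not> int p dvd a"
  shows "padic_norm p (of_int a / of_nat p ^ k) = real p ^ k"
proof -
  have "a \<noteq> 0" using a by auto
  moreover have "multiplicity (int p) a = 0"
    using a by (simp add: not_dvd_imp_multiplicity_0)
  moreover have "multiplicity (int p) (int p ^ k) = k" using p by simp
  ultimately show ?thesis
    using padic_norm_of_int_divide[OF p, of a "int p ^ k"] p
    by (simp add: powr_realpow prime_gt_0_nat)
qed

lemma Zinvp_fraction_denominator_le:
  assumes p: "prime p" and g: "g \<in> Zinvp p"
  obtains a k where "g = of_int a / of_nat p ^ k" and "real p ^ k \<le> max 1 (padic_norm p g)"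
proof -
  obtain a k where g_ak: "g = of_int a / of_nat p ^ k" and "k = 0 \<or> \<not> int p dvd a"
    using Zinvp_reduced_fraction[OF p g] .
  then have "real p ^ k \<le> max 1 (padic_norm p g)"
    using padic_norm_of_int_divide_prime_power[OF p] by auto
  with g_ak show ?thesis by (rule that)
qed

lemma finite_Zinvp_norms_le:
  assumes p: "prime p"
  shows "finite {g \<in> Zinvp p. real_of_rat \<bar>g\<bar> \<le> R \<and> padic_norm p g \<le> R}"
proof -
  define N where "N = nat \<lceil>(1 + R)\<^sup>2\<rceil>"
  have "{g \<in> Zinvp p. real_of_rat \<bar>g\<bar> \<le> R \<and> padic_norm p g \<le> R} \<subseteq>
      (\<lambda>(a, k). of_int a / of_nat p ^ k) ` ({- int N..int N} \<times> {..N})"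
  proof clarify
    fix g assume g: "g \<in> Zinvp p" and abs_le: "real_of_rat \<bar>g\<bar> \<le> R"
      and norm_le: "padic_norm p g \<le> R"
    obtain a k where g_ak: "g = of_int a / of_nat p ^ k"
      and pk_le: "real p ^ k \<le> max 1 (padic_norm p g)"
      using Zinvp_fraction_denominator_le[OF p g] .
    have "real_of_rat \<bar>g\<bar> \<ge> 0" by simp
    with abs_le have R: "R \<ge> 0" by linarith
    have pk: "real p ^ k \<le> 1 + R" using pk_le norm_le R by linarith
    have "real k < 2 ^ k" by (metis less_exp of_nat_less_iff of_nat_numeral of_nat_power)
    also have "\<dots> \<le> real p ^ k" using prime_ge_2_nat[OF p] by (intro power_mono) auto
    also have "\<dots> \<le> 1 + R" by (rule pk)
    also have "\<dots> \<le> (1 + R)\<^sup>2" using R by (simp add: power2_eq_square algebra_simps)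
    finally have "real k \<le> (1 + R)\<^sup>2" by simp
    then have "k \<le> N" unfolding N_def by linarith
    have "\<bar>real_of_int a\<bar> = real_of_rat \<bar>g\<bar> * real p ^ k"
      using g_ak p by (simp add: of_rat_divide of_rat_power abs_divide prime_gt_0_nat flip: of_int_abs)
    also have "\<dots> \<le> R * (1 + R)" using abs_le pk R by (intro mult_mono) auto
    also have "\<dots> \<le> (1 + R)\<^sup>2" using R by (simp add: power2_eq_square algebra_simps)
    finally have "\<bar>a\<bar> \<le> int N" unfolding N_def by linarith
    with \<open>k \<le> N\<close> g_ak
    show "g \<in> (\<lambda>(a, k). of_int a / of_nat p ^ k) ` ({- int N..int N} \<times> {..N})"
      by (auto intro!: image_eqI[of _ _ "(a, k)"])
  qed
  then show ?thesis by (rule finite_subset) simp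
qed

lemma abs_le_Lp: "real_of_rat \<bar>r\<bar> \<le> Lp p r"
  unfolding Lp_def using padic_norm_nonneg[of p r] by simp

lemma padic_norm_le_Lp: "padic_norm p r \<le> Lp p r"
  unfolding Lp_def by simp

lemma is_length_function_Lp:
  assumes p: "prime p"
  shows "is_length_function G (Lp p)"
  unfolding is_length_function_def Lp_def
proof (intro conjI ballI)
  fix g h :: rat
  show "real_of_rat \<bar>g\<bar> + padic_norm p g \<ge> 0"
    using padic_norm_nonneg[of p g] by simp
  show "real_of_rat \<bar>g\<bar> + padic_norm p g = 0 \<longleftrightarrow> g = 0"
    by (auto simp: add_nonneg_eq_0_iff padic_norm_nonneg)
  show "real_of_rat \<bar>- g\<bar> + padic_norm p (- g) = real_of_rat \<bar>g\<bar> + padic_norm p g"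
    by (simp add: p)
  have "real_of_rat \<bar>g + h\<bar> \<le> real_of_rat \<bar>g\<bar> + real_of_rat \<bar>h\<bar>"
    by (simp flip: of_rat_add add: of_rat_less_eq abs_triangle_ineq)
  then show "real_of_rat \<bar>g + h\<bar> + padic_norm p (g + h) \<le>
      real_of_rat \<bar>g\<bar> + padic_norm p g + (real_of_rat \<bar>h\<bar> + padic_norm p h)"
    using padic_norm_triangle[OF p, of g h] by linarith
qed

lemma proper_length_Lp:
  assumes "prime p"
  shows "proper_length (Zinvp p) (Lp p)"
  unfolding proper_length_def
proof (intro allI impI)
  fix R :: real
  have "{g \<in> Zinvp p. Lp p g \<le> R} \<subseteq>
      {g \<in> Zinvp p. real_of_rat \<bar>g\<bar> \<le> R \<and> padic_norm p g \<le> R}"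
    using abs_le_Lp padic_norm_le_Lp order_trans by blast
  then show "finite {g \<in> Zinvp p. Lp p g \<le> R}"
    using finite_Zinvp_norms_le[OF assms] by (rule finite_subset)
qed

lemma of_int_in_Zinvp: "of_int n \<in> Zinvp p"
  unfolding Zinvp_def by (rule CollectI, rule exI[of _ n], rule exI[of _ 0]) simp

lemma unbounded_length_Lp: "unbounded_length (Zinvp p) (Lp p)"
  unfolding unbounded_length_def
proof
  fix C :: real
  let ?n = "\<lceil>\<bar>C\<bar>\<rceil> + 1"
  have "C < real_of_int ?n" by linarith
  also have "\<dots> = real_of_rat \<bar>of_int ?n\<bar>" by (simp add: abs_of_pos of_rat_add)
  also have "\<dots> \<le> Lp p (of_int ?n)" by (rule abs_le_Lp)
  finally show "\<exists>g\<in>Zinvp p. C < Lp p g" using of_int_in_Zinvp by blast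
qed

theorem lemma3p4:
  fixes p :: nat
  assumes "prime p"
  shows "is_length_function (Zinvp p) (Lp p) \<and> proper_length (Zinvp p) (Lp p)
         \<and> unbounded_length (Zinvp p) (Lp p)"
  using is_length_function_Lp[OF assms] proper_length_Lp[OF assms] unbounded_length_Lp
  by blast

end
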